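(* Let $X$ be a set and $F,F'$ be forests of planar binary trees with leaves decorated by $X$, $F'=T_1\cdots T_k$, $k\ge1$. Write the formal sum $\mathcal{F}(F')=\sum_Sm(S)\,S$ (sum over distinct forests $S$, $m(S)\in\mathbb{N}$). Then in $T(\mathrm{Mag}(X))$: $F*F'=\sum_Sm(S)(-1)^{l(S)+k}\,F\curvearrowleft S$.
   Context: Trees/forests: $\mathrm{Mag}(X)$ is identified with the span of planar rooted binary trees with leaves decorated by $X$, with magmatic product $T_1*T_2=T_1\vee T_2$ (graft $T_1,T_2$ as left and right subtrees of a new root); $T(\mathrm{Mag}(X))$ has basis the forests (words of trees), product concatenation, trees primitive; $l(S)$ is the number of trees of a forest $S$. The product $*$ is extended to $T(\mathrm{Mag}(X))$ as the unique bilinear map with, for all $f,g,h$ and trees $y$: $\varepsilon(f*g)=\varepsilon(f)\varepsilon(g)$; $\Delta(f*g)=\Delta(f)*\Delta(g)$; $f*1=f$; $1*f=\varepsilon(f)1$; $f*(gy)=(f*g)*y-f*(g*y)$; $(fg)*h=(f*h^{(1)})(g*h^{(2)})$; $(f*g)*h=f*\big((g*h^{(1)})h^{(2)}\big)$. For a forest $F=F_1\cdots F_p$ and a forest $S=S_1\cdots S_n$: $F\curvearrowleft S_1=\sum_{i=1}^pF_1\cdots(F_i\vee S_1)\cdots F_p$ and, for $n\ge2$, $F\curvearrowleft S=(F\curvearrowleft S_1\cdots S_{n-1})*S_n$ (extended linearly in $F$). The formal sums (multisets) $\mathcal{F}$ of forests are defined recursively by $\mathcal{F}(T_1)=T_1$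 and $\mathcal{F}(T_1\cdots T_{j+1})=R_{T_{j+1}}\big(\mathcal{F}(T_1\cdots T_j)\big)+\sum_{i=1}^j\mathcal{F}\big(T_1\cdots T_{i-1}(T_i\vee T_{j+1})T_{i+1}\cdots T_j\big)$, where $R_{T}$ is the linear map appending the tree $T$ on the right of a forest. *)

theory Defs
  imports Main "HOL-Library.Poly_Mapping" "HOL-Library.Multiset"
begin

datatype 'x tree = Leaf 'x | Node "'x tree" "'x tree"
  (* Node T1 T2 = T1 \<or> T2 : graft T1, T2 as left and right subtrees of a new root *)

type_synonym 'x forest = "'x tree list"

(* Elements of T(Mag(X)) over the coefficient field 'k: finitely supported
   linear combinations of forests (basis = forests, product = concatenation) *)
type_synonym ('x, 'k) TM = "'x forest \<Rightarrow>\<^sub>0 'k"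
(* Elements of T(Mag(X)) \<otimes> T(Mag(X)) *)
type_synonym ('x, 'k) TM2 = "('x forest \<times> 'x forest) \<Rightarrow>\<^sub>0 'k"

definition smul :: "'k::field \<Rightarrow> ('a \<Rightarrow>\<^sub>0 'k) \<Rightarrow> ('a \<Rightarrow>\<^sub>0 'k)" where
  "smul c p = Poly_Mapping.map ((*) c) p"

definition basis :: "'a \<Rightarrow> ('a \<Rightarrow>\<^sub>0 'k::field)" where
  "basis a = Poly_Mapping.single a 1"

definition lin :: "('a \<Rightarrow> ('b \<Rightarrow>\<^sub>0 'k::field)) \<Rightarrow> ('a \<Rightarrow>\<^sub>0 'k) \<Rightarrow> ('b \<Rightarrow>\<^sub>0 'k)" where
  "lin \<phi> p = (\<Sum>a\<in>Poly_Mapping.keys p. smul (Poly_Mapping.lookup p a) (\<phi> a))"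

definition bilin :: "('a \<Rightarrow> 'b \<Rightarrow> ('c \<Rightarrow>\<^sub>0 'k::field)) \<Rightarrow> ('a \<Rightarrow>\<^sub>0 'k) \<Rightarrow> ('b \<Rightarrow>\<^sub>0 'k) \<Rightarrow> ('c \<Rightarrow>\<^sub>0 'k)" where
  "bilin s f g = lin (\<lambda>a. lin (\<lambda>b. s a b) g) f"

definition conc :: "('x, 'k::field) TM \<Rightarrow> ('x, 'k) TM \<Rightarrow> ('x, 'k) TM" where
  "conc f g = bilin (\<lambda>a b. basis (a @ b)) f g"

definition unitT :: "('x, 'k::field) TM" where
  "unitT = basis []"

definition eps :: "('x, 'k::field) TM \<Rightarrow> 'k" where
  "eps f = Poly_Mapping.lookup f []"

definition tens :: "('x, 'k::field) TM \<Rightarrow> ('x, 'k) TM \<Rightarrow> ('x, 'k) TM2" where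
  "tens u v = bilin (\<lambda>a b. basis (a, b)) u v"

definition tens_prod :: "(('x, 'k::field) TM \<Rightarrow> ('x, 'k) TM \<Rightarrow> ('x, 'k) TM)
    \<Rightarrow> ('x, 'k) TM2 \<Rightarrow> ('x, 'k) TM2 \<Rightarrow> ('x, 'k) TM2" where
  "tens_prod st P Q = bilin (\<lambda>(a, b) (c, d). tens (st (basis a) (basis c)) (st (basis b) (basis d))) P Q"

text \<open>Deshuffle coproduct of T(Mag(X)) (concatenation-multiplicative, trees primitive).\<close>
fun DeltaB :: "'x forest \<Rightarrow> ('x, 'k::field) TM2" where
  "DeltaB [] = basis ([], [])"
| "DeltaB (T # F) = lin (\<lambda>(a, b). basis (T # a, b) + basis (a, T # b)) (DeltaB F)"

definition Delta :: "('x, 'k::field) TM \<Rightarrow> ('x, 'k) TM2" where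
  "Delta f = lin DeltaB f"

text \<open>Sweedler-type expression  \<Sum> \<Phi>(h^(1), h^(2)).\<close>
definition sweedler :: "('x forest \<Rightarrow> 'x forest \<Rightarrow> ('x, 'k::field) TM) \<Rightarrow> ('x, 'k) TM \<Rightarrow> ('x, 'k) TM" where
  "sweedler \<Phi> h = lin (\<lambda>(a, b). \<Phi> a b) (Delta h)"

text \<open>The characterisation of the product * on T(Mag(X)): a bilinear map
  (given by its values s on pairs of basis forests, star = bilin s) extending
  the magmatic product T1 * T2 = T1 \<or> T2 on trees and satisfying the axioms.\<close>
definition is_mag_star :: "('x forest \<Rightarrow> 'x forest \<Rightarrow> ('x, 'k::field) TM) \<Rightarrow> bool" where
  "is_mag_star s \<longleftrightarrow>
     (let st = bilin s in
       (\<forall>T1 T2. st (basis [T1]) (basis [T2]) = basis [Node T1 T2]) \<and>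
       (\<forall>f g. eps (st f g) = eps f * eps g) \<and>
       (\<forall>f g. Delta (st f g) = tens_prod st (Delta f) (Delta g)) \<and>
       (\<forall>f. st f unitT = f) \<and>
       (\<forall>f. st unitT f = smul (eps f) unitT) \<and>
       (\<forall>f g y. st f (conc g (basis [y])) = st (st f g) (basis [y]) - st f (st g (basis [y]))) \<and>
       (\<forall>f g h. st (conc f g) h = sweedler (\<lambda>a b. conc (st f (basis a)) (st g (basis b))) h) \<and>
       (\<forall>f g h. st (st f g) h = st f (sweedler (\<lambda>a b. conc (st g (basis a)) (basis b)) h)))"

text \<open>F \<curvearrowleft> S for forests F, S = S1 ... Sn (n \<ge> 1).\<close>
definition graft :: "'x forest \<Rightarrow> 'x tree \<Rightarrow> ('x, 'k::field) TM" where
  "graft F T = (\<Sum>i<length F. basis (F[i := Node (F ! i) T]))"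

fun curv :: "('x forest \<Rightarrow> 'x forest \<Rightarrow> ('x, 'k::field) TM) \<Rightarrow> 'x forest \<Rightarrow> 'x forest \<Rightarrow> ('x, 'k) TM" where
  "curv s F [] = basis F"  (* not used: S is always nonempty *)
| "curv s F (S1 # Ss) = foldl (\<lambda>v T. bilin s v (basis [T])) (graft F S1) Ss"

function Fm :: "'x forest \<Rightarrow> 'x forest multiset" where
  "Fm Ts = (if length Ts \<le> 1 then {# Ts #}
            else (let T = last Ts; U = butlast Ts in
                  image_mset (\<lambda>S. S @ [T]) (Fm U)
                  + (\<Sum>i<length U. Fm (U[i := Node (U ! i) T]))))"
  by auto
termination
  by (relation "measure length") auto

end

theory Submission
  imports Defs
begin

text \<open>Both sides obey the same recursion in the last tree T of F' = U T.
  On the left, the axiom f * (g y) = (f * g) * y - f * (g * y), together with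
  U * T = U \<curvearrowleft> T (a consequence of the compatibility of * with
  concatenation and the coproduct), expresses F * (U T) as (F * U) * T minus
  the sum over i of F * (U with T grafted on its i-th tree).
  On the right, the recursive definition of \<F>(U T) and
  F \<curvearrowleft> (S T) = (F \<curvearrowleft> S) * T give the same identity;
  the sign change comes from the grafted forests having one tree fewer than U T.\<close>

lemma lookup_smul [simp]: "Poly_Mapping.lookup (smul c p) x = c * Poly_Mapping.lookup p x"
  by (simp add: smul_def Poly_Mapping.map.rep_eq when_def)

lemma smul_zero_left [simp]: "smul 0 p = 0"
  by (rule poly_mapping_eqI) simp

lemma smul_one [simp]: "smul 1 p = p"
  by (rule poly_mapping_eqI) simp

lemma smul_zero_right [simp]: "smul c 0 = 0"
  by (rule poly_mapping_eqI) simp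

lemma smul_add_left: "smul (c + d) p = smul c p + smul d p"
  by (rule poly_mapping_eqI) (simp add: lookup_add algebra_simps)

lemma smul_add: "smul c (p + q) = smul c p + smul c q"
  by (rule poly_mapping_eqI) (simp add: lookup_add algebra_simps)

lemma smul_smul: "smul c (smul d p) = smul (c * d) p"
  by (rule poly_mapping_eqI) (simp add: algebra_simps)

lemma smul_uminus: "smul (- c) p = - smul c p"
  by (rule poly_mapping_eqI) simp

lemma smul_sum: "smul c (sum f A) = (\<Sum>a\<in>A. smul c (f a))"
  by (rule poly_mapping_eqI) (simp add: lookup_sum sum_distrib_left)

lemma lin_superset:
  assumes "finite A" "Poly_Mapping.keys p \<subseteq> A"
  shows "lin \<phi> p = (\<Sum>a\<in>A. smul (Poly_Mapping.lookup p a) (\<phi> a))"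
  unfolding lin_def
  by (rule sum.mono_neutral_left) (use assms in \<open>auto simp: in_keys_iff\<close>)

lemma lin_zero [simp]: "lin \<phi> 0 = 0"
  by (simp add: lin_def)

lemma lin_add: "lin \<phi> (p + q) = lin \<phi> p + lin \<phi> q"
proof -
  let ?A = "Poly_Mapping.keys p \<union> Poly_Mapping.keys q"
  have "lin \<phi> (p + q) = (\<Sum>a\<in>?A. smul (Poly_Mapping.lookup (p + q) a) (\<phi> a))"
    by (rule lin_superset) (auto simp: keys_add)
  also have "\<dots> = (\<Sum>a\<in>?A. smul (Poly_Mapping.lookup p a) (\<phi> a))
                 + (\<Sum>a\<in>?A. smul (Poly_Mapping.lookup q a) (\<phi> a))"
    by (simp add: lookup_add smul_add_left sum.distrib)
  also have "\<dots> = lin \<phi> p + lin \<phi> q"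
    by (simp add: lin_superset[of ?A p] lin_superset[of ?A q])
  finally show ?thesis .
qed

lemma lin_smul: "lin \<phi> (smul c p) = smul c (lin \<phi> p)"
proof -
  have "lin \<phi> (smul c p) = (\<Sum>a\<in>Poly_Mapping.keys p. smul (Poly_Mapping.lookup (smul c p) a) (\<phi> a))"
    by (rule lin_superset) (auto simp: in_keys_iff)
  then show ?thesis
    by (simp add: lin_def smul_sum smul_smul)
qed

lemma lin_sum: "lin \<phi> (sum f A) = (\<Sum>a\<in>A. lin \<phi> (f a))"
  by (induction A rule: infinite_finite_induct) (simp_all add: lin_add)

lemma lin_sum_mset: "lin \<phi> (\<Sum>a\<in>#M. f a) = (\<Sum>a\<in>#M. lin \<phi> (f a))"
  by (induction M) (simp_all add: lin_add)

lemma lin_basis [simp]: "lin \<phi> (basis a) = \<phi> a"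
  by (simp add: lin_def basis_def)

lemma lin_fun_add: "lin (\<lambda>a. \<phi> a + \<psi> a) p = lin \<phi> p + lin \<psi> p"
  by (simp add: lin_def smul_add sum.distrib)

lemma lin_fun_sum: "lin (\<lambda>a. \<Sum>i\<in>I. \<phi> i a) p = (\<Sum>i\<in>I. lin (\<phi> i) p)"
  by (induction I rule: infinite_finite_induct) (simp_all add: lin_fun_add lin_def)

lemma bilin_basis [simp]: "bilin s (basis a) (basis b) = s a b"
  by (simp add: bilin_def)

lemma bilin_smul_left: "bilin s (smul c f) h = smul c (bilin s f h)"
  by (simp add: bilin_def lin_smul)

lemma bilin_sum_mset_left: "bilin s (\<Sum>a\<in>#M. f a) h = (\<Sum>a\<in>#M. bilin s (f a) h)"
  by (simp add: bilin_def lin_sum_mset)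

lemma bilin_sum_right: "bilin s f (sum g A) = (\<Sum>a\<in>A. bilin s f (g a))"
  by (simp add: bilin_def lin_sum lin_fun_sum)

lemma conc_basis [simp]: "conc (basis a) (basis b) = basis (a @ b)"
  by (simp add: conc_def)

lemma conc_sum_right: "conc f (sum g A) = (\<Sum>a\<in>A. conc f (g a))"
  by (simp add: conc_def bilin_sum_right)

lemma sweedler_basis_tree: "sweedler \<Phi> (basis [T]) = \<Phi> [T] [] + \<Phi> [] [T]"
  by (simp add: sweedler_def Delta_def lin_add)

declare Fm.simps [simp del]

lemma Fm_single: "Fm [T] = {#[T]#}"
  by (subst Fm.simps) simp

lemma Fm_snoc:
  "U \<noteq> [] \<Longrightarrow> Fm (U @ [T]) = image_mset (\<lambda>S. S @ [T]) (Fm U)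
                                + (\<Sum>i<length U. Fm (U[i := Node (U ! i) T]))"
  by (subst Fm.simps) (simp add: Let_def)

lemma Fm_nonempty: "S \<in># Fm Ts \<Longrightarrow> Ts \<noteq> [] \<Longrightarrow> S \<noteq> []"
proof (induction Ts arbitrary: S rule: Fm.induct)
  case (1 Ts)
  show ?case
  proof (cases "length Ts \<le> 1")
    case True
    then show ?thesis
      using "1.prems" by (simp add: Fm.simps)
  next
    case False
    let ?U = "butlast Ts" and ?T = "last Ts"
    from "1.prems"(1) False
    consider "S \<in># image_mset (\<lambda>S. S @ [?T]) (Fm ?U)"
      | i where "i < length ?U" "S \<in># Fm (?U[i := Node (?U ! i) ?T])"
      by (auto simp: Fm.simps[of Ts] Let_def set_mset_sum)
    then show ?thesis
    proof cases
      case 2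
      then have "?U \<noteq> []"
        by (auto simp del: length_butlast)
      with 2 show ?thesis
        using "1.IH"(2)[OF False refl refl, of i S] by auto
    qed auto
  qed
qed

lemma sum_mset_image_sum: "(\<Sum>x\<in>#(\<Sum>i\<in>I. M i). g x) = (\<Sum>i\<in>I. \<Sum>x\<in>#M i. g x)"
  by (induction I rule: infinite_finite_induct) simp_all

lemma sum_mset_negf: "(\<Sum>x\<in>#M. - f x) = - (\<Sum>x\<in>#M. f x :: 'a::ab_group_add)"
  by (induction M) simp_all

definition signed_curv_sum ::
    "('x forest \<Rightarrow> 'x forest \<Rightarrow> ('x, 'k::field) TM) \<Rightarrow> 'x forest \<Rightarrow> 'x forest \<Rightarrow> ('x, 'k) TM" where
  "signed_curv_sum s F V = (\<Sum>S\<in>#Fm V. smul ((-1) ^ (length S + length V)) (curv s F S))"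

lemma signed_curv_sum_single: "signed_curv_sum s F [T] = graft F T"
  by (simp add: signed_curv_sum_def Fm_single)

lemma signed_curv_sum_snoc:
  fixes s :: "'x forest \<Rightarrow> 'x forest \<Rightarrow> ('x, 'k::field) TM"
  assumes "U \<noteq> []"
  shows "signed_curv_sum s F (U @ [T])
       = bilin s (signed_curv_sum s F U) (basis [T])
         - (\<Sum>i<length U. signed_curv_sum s F (U[i := Node (U ! i) T]))"
proof -
  define c where "c S = ((-1) ^ (length S + length U) :: 'k)" for S :: "'x forest"
  have curv_snoc: "curv s F (S @ [T]) = bilin s (curv s F S) (basis [T])" if "S \<in># Fm U" for S
    using Fm_nonempty[OF that assms] by (cases S) simp_all
  have "signed_curv_sum s F (U @ [T])
      = (\<Sum>S\<in>#Fm U. smul (c S) (curv s F (S @ [T])))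
        + (\<Sum>i<length U. \<Sum>S\<in>#Fm (U[i := Node (U ! i) T]). - smul (c S) (curv s F S))"
    by (simp add: signed_curv_sum_def Fm_snoc[OF assms] c_def smul_uminus[symmetric]
        multiset.map_comp o_def sum_mset_image_sum)
  also have "(\<Sum>S\<in>#Fm U. smul (c S) (curv s F (S @ [T]))) = bilin s (signed_curv_sum s F U) (basis [T])"
    by (simp add: signed_curv_sum_def bilin_sum_mset_left bilin_smul_left c_def curv_snoc
        cong: image_mset_cong)
  finally show ?thesis
    by (simp add: signed_curv_sum_def c_def sum_mset_negf sum_negf)
qed

context
  fixes s :: "'x forest \<Rightarrow> 'x forest \<Rightarrow> ('x, 'k::field) TM"
  assumes star: "is_mag_star s"
begin

lemma star_tree_tree: "s [T1] [T2] = basis [Node T1 T2]"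
  using star bilin_basis[of s "[T1]" "[T2]"] by (simp add: is_mag_star_def Let_def)

lemma star_unit_left: "bilin s unitT f = smul (eps f) unitT"
  using star by (simp add: is_mag_star_def Let_def)

lemma star_unit_right: "bilin s f unitT = f"
  using star by (simp add: is_mag_star_def Let_def)

lemma star_conc_tree_right:
  "bilin s f (conc g (basis [y])) = bilin s (bilin s f g) (basis [y]) - bilin s f (bilin s g (basis [y]))"
  using star by (simp add: is_mag_star_def Let_def)

lemma star_conc_left:
  "bilin s (conc f g) h = sweedler (\<lambda>a b. conc (bilin s f (basis a)) (bilin s g (basis b))) h"
  using star by (simp add: is_mag_star_def Let_def)

lemma star_tree_right_eq_graft: "s F [T] = graft F T"
proof (induction F)
  case Nil
  have "eps (basis [T] :: ('x, 'k) TM) = 0"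
    by (simp add: eps_def basis_def lookup_single)
  then show ?case
    using star_unit_left[of "basis [T]"] by (simp add: unitT_def graft_def)
next
  case (Cons A F)
  have "basis (A # F) = conc (basis [A]) (basis F)"
    by simp
  then have "s (A # F) [T] = conc (basis [Node A T]) (basis F) + conc (basis [A]) (graft F T)"
    using star_conc_left[of "basis [A]" "basis F" "basis [T]"] star_unit_right[of "basis _"]
    by (simp add: sweedler_basis_tree star_tree_tree Cons unitT_def)
  also have "\<dots> = graft (A # F) T"
    by (simp add: graft_def conc_sum_right sum.lessThan_Suc_shift del: sum.lessThan_Suc)
  finally show ?case .
qed

lemma star_basis_snoc:
  "s F (U @ [T]) = bilin s (s F U) (basis [T]) - (\<Sum>i<length U. s F (U[i := Node (U ! i) T]))"
  using star_conc_tree_right[of "basis F" "basis U" T]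
  by (simp add: star_tree_right_eq_graft graft_def bilin_sum_right)

lemma star_basis_eq_signed_curv_sum: "length F' = Suc n \<Longrightarrow> s F F' = signed_curv_sum s F F'"
proof (induction n arbitrary: F')
  case 0
  then obtain T where "F' = [T]"
    by (auto simp: length_Suc_conv)
  then show ?case
    by (simp add: star_tree_right_eq_graft signed_curv_sum_single)
next
  case (Suc n)
  then obtain U T where F': "F' = U @ [T]" and U: "length U = Suc n"
    by (auto simp: length_Suc_conv_rev)
  then have "U \<noteq> []"
    by auto
  then show ?case
    unfolding F' star_basis_snoc signed_curv_sum_snoc[OF \<open>U \<noteq> []\<close>]
    using U by (simp add: Suc.IH)
qed

end

theorem proposition4p3:
  fixes s :: "'x forest \<Rightarrow> 'x forest \<Rightarrow> ('x, 'k::field) TM"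
    and F F' :: "'x forest"
  assumes "is_mag_star s"
    and "length F' \<ge> 1"
  shows "bilin s (basis F) (basis F')
       = (\<Sum>S\<in>#Fm F'. smul ((-1) ^ (length S + length F')) (curv s F S))"
proof -
  obtain n where "length F' = Suc n"
    using assms(2) by (cases "length F'") auto
  then show ?thesis
    using star_basis_eq_signed_curv_sum[OF assms(1)] by (simp add: signed_curv_sum_def)
qed

end
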